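(* Let $\mathcal{D}$ be a liability category, let $N=(G,X,\lambda,\iota;\delta,\hat\alpha)$ be a liability network in $\mathcal{D}$ with $G=(V,E,s,t)$ and liability sheaf $\mathcal{L}$ on $\mathcal{H}_G$. Let $P=\prod_{v}X_v$, $B=\prod_eX_{s(e)}^{\lambda_e}$, $D:P\to B$ with $D_e=\delta_e\circ\pi_{s(e)}$, $A:B\to P$ with $A_v=\alpha_v\circ\langle\pi_e\rangle_{t(e)=v}$, $\Phi=A\circ D:P\to P$, and $\Psi=D\circ A:B\to B$. Then $D$ and $A$ restrict to mutually inverse isomorphisms \[ D:\mathrm{Eq}(\mathrm{id}_P,\Phi)\xrightarrow{\cong}\mathrm{Eq}(\mathrm{id}_B,\Psi),\qquad A:\mathrm{Eq}(\mathrm{id}_B,\Psi)\xrightarrow{\cong}\mathrm{Eq}(\mathrm{id}_P,\Phi) \] in $\mathcal{D}$. In particular $H^0(\mathcal{H}_G;\mathcal{L})\cong\mathrm{Eq}(\mathrm{id}_B,D\circ A)$, and the induced maps $D_*:\mathrm{Fix}(\Phi_* )\to\mathrm{Fix}(\Psi_* )$ and $A_*:\mathrm{Fix}(\Psi_* )\to\mathrm{Fix}(\Phi_* )$ are mutually inverse bijections.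
   Context: A liability category is a category $\mathcal{D}$ such that: (1) $\mathcal{D}$ has a terminal object $1$, all finite products, and equalizers; (2) each $\mathrm{Hom}(1,P)$ carries a partial order and postcomposition with any morphism is order-preserving; (3) each $P$ has a distinguished pullback-stable class $\mathcal{S}_P$ of monomorphisms into $P$ (constraint subobjects); (4) a bound selector $\beta_P:\mathrm{Hom}(1,P)\to\mathcal{S}_P$; (5) $\mathrm{Hom}(1,\prod_iP_i)\to\prod_i\mathrm{Hom}(1,P_i)$ is an order isomorphism for finite families with componentwise order. A liability network in $\mathcal{D}$ is $N=(G,X,\lambda,\iota;\delta,\hat\alpha)$ with $G=(V,E,s,t)$ a finite directed graph, payment objects $X_v$, liability morphisms $\lambda_e:1\to X_{s(e)}$, exogenous resources $\iota_v:1\to X_v$, distributors $\delta_e:X_{s(e)}\to X_{s(e)}^{\lambda_e}$ where $X_{s(e)}^{\lambda_e}$ is the domain of $\beta_{X_{s(e)}}(\lambda_e)$, and aggregators $\hat\alpha_v:X_v\times\prod_{t(e)=v}X_{s(e)}^{\lambda_e}\to X_v$; the partial aggregator is $\alpha_v=\hat\alpha_v\circ(\iota_v\times\mathrm{id})$, empty products being $1$. The liability hypergraph $\mathcal{H}_G$ has vertices $V\sqcup\{e^*:e\in E\}$ and hyperedges $h_v^\delta$ (source $\{v\}$, target $\{e^*:s(e)=v\}$), $h_v^\alpha$ (empty source, target $\{e^*:t(e)=v\}\cup\{v\}$); its incidence category $\mathcal{I}(\mathcal{H}_G)$ has one non-identity morphism $h\to w$ per incidence and no other composites. The liability sheaf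 $\mathcal{L}:\mathcal{I}(\mathcal{H}_G)\to\mathcal{D}$ has stalks $X_v$ at $v$ and $h_v^\delta$, $X_{s(e)}^{\lambda_e}$ at $e^*$, $\prod_{t(e)=v}X_{s(e)}^{\lambda_e}$ at $h_v^\alpha$, and restrictions $\mathrm{id}$, $\delta_e$, projections $\pi_e$, and $\alpha_v$ for $h_v^\delta\to v$, $h_v^\delta\to e^*$, $h_v^\alpha\to e^*$, $h_v^\alpha\to v$ respectively. $H^0(\mathcal{H}_G;\mathcal{L})=\lim_{\mathcal{I}(\mathcal{H}_G)}\mathcal{L}$. For an endomorphism $\Theta:Y\to Y$, $\Theta_*$ is the map $\rho\mapsto\Theta\circ\rho$ on $\mathrm{Hom}(1,Y)$ and $\mathrm{Fix}(\Theta_* )=\{\rho:1\to Y:\Theta\circ\rho=\rho\}$. $\mathrm{Eq}$ denotes the equalizer. *)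

theory Defs
  imports Main
begin

record ('o, 'm) cat =
  Ob  :: "'o set"
  Ar  :: "'m set"
  dm  :: "'m \<Rightarrow> 'o"
  cd  :: "'m \<Rightarrow> 'o"
  cmp :: "'m \<Rightarrow> 'm \<Rightarrow> 'm"   (* cmp C g f = g \<circ> f *)
  idm :: "'o \<Rightarrow> 'm"

definition Hom :: "('o, 'm, 'x) cat_scheme \<Rightarrow> 'o \<Rightarrow> 'o \<Rightarrow> 'm set" where
  "Hom C a b = {f \<in> Ar C. dm C f = a \<and> cd C f = b}"

definition is_category :: "('o, 'm, 'x) cat_scheme \<Rightarrow> bool" where
  "is_category C \<longleftrightarrow>
     (\<forall>f\<in>Ar C. dm C f \<in> Ob C \<and> cd C f \<in> Ob C) \<and>
     (\<forall>a\<in>Ob C. idm C a \<in> Hom C a a) \<and>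
     (\<forall>f\<in>Ar C. \<forall>g\<in>Ar C. dm C g = cd C f \<longrightarrow> cmp C g f \<in> Hom C (dm C f) (cd C g)) \<and>
     (\<forall>f\<in>Ar C. \<forall>g\<in>Ar C. \<forall>h\<in>Ar C. dm C g = cd C f \<longrightarrow> dm C h = cd C g \<longrightarrow>
         cmp C h (cmp C g f) = cmp C (cmp C h g) f) \<and>
     (\<forall>f\<in>Ar C. cmp C (idm C (cd C f)) f = f \<and> cmp C f (idm C (dm C f)) = f)"

definition is_terminal :: "('o, 'm, 'x) cat_scheme \<Rightarrow> 'o \<Rightarrow> bool" where
  "is_terminal C T \<longleftrightarrow> T \<in> Ob C \<and> (\<forall>Z\<in>Ob C. \<exists>!f. f \<in> Hom C Z T)"

definition is_product ::
  "('o, 'm, 'x) cat_scheme \<Rightarrow> 'i set \<Rightarrow> ('i \<Rightarrow> 'o) \<Rightarrow> 'o \<Rightarrow> ('i \<Rightarrow> 'm) \<Rightarrow> bool" where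
  "is_product C I F P \<pi> \<longleftrightarrow>
     P \<in> Ob C \<and> (\<forall>i\<in>I. F i \<in> Ob C \<and> \<pi> i \<in> Hom C P (F i)) \<and>
     (\<forall>Z\<in>Ob C. \<forall>f. (\<forall>i\<in>I. f i \<in> Hom C Z (F i)) \<longrightarrow>
        (\<exists>!u. u \<in> Hom C Z P \<and> (\<forall>i\<in>I. cmp C (\<pi> i) u = f i)))"

definition is_binprod ::
  "('o, 'm, 'x) cat_scheme \<Rightarrow> 'o \<Rightarrow> 'o \<Rightarrow> 'o \<Rightarrow> 'm \<Rightarrow> 'm \<Rightarrow> bool" where
  "is_binprod C A1 A2 P p1 p2 \<longleftrightarrow>
     P \<in> Ob C \<and> A1 \<in> Ob C \<and> A2 \<in> Ob C \<and> p1 \<in> Hom C P A1 \<and> p2 \<in> Hom C P A2 \<and>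
     (\<forall>Z\<in>Ob C. \<forall>f1 f2. f1 \<in> Hom C Z A1 \<longrightarrow> f2 \<in> Hom C Z A2 \<longrightarrow>
        (\<exists>!u. u \<in> Hom C Z P \<and> cmp C p1 u = f1 \<and> cmp C p2 u = f2))"

definition has_finite_products :: "('o, 'm, 'x) cat_scheme \<Rightarrow> bool" where
  "has_finite_products C \<longleftrightarrow>
     (\<forall>(I :: nat set) F. finite I \<longrightarrow> (\<forall>i\<in>I. F i \<in> Ob C) \<longrightarrow> (\<exists>P \<pi>. is_product C I F P \<pi>))"

definition is_equalizer ::
  "('o, 'm, 'x) cat_scheme \<Rightarrow> 'm \<Rightarrow> 'm \<Rightarrow> 'o \<Rightarrow> 'm \<Rightarrow> bool" where
  "is_equalizer C f g E e \<longleftrightarrow>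
     f \<in> Ar C \<and> g \<in> Ar C \<and> dm C f = dm C g \<and> cd C f = cd C g \<and>
     e \<in> Hom C E (dm C f) \<and> cmp C f e = cmp C g e \<and>
     (\<forall>Z\<in>Ob C. \<forall>h. h \<in> Hom C Z (dm C f) \<longrightarrow> cmp C f h = cmp C g h \<longrightarrow>
        (\<exists>!u. u \<in> Hom C Z E \<and> cmp C e u = h))"

definition has_equalizers :: "('o, 'm, 'x) cat_scheme \<Rightarrow> bool" where
  "has_equalizers C \<longleftrightarrow>
     (\<forall>f\<in>Ar C. \<forall>g\<in>Ar C. dm C f = dm C g \<longrightarrow> cd C f = cd C g \<longrightarrow>
        (\<exists>E e. is_equalizer C f g E e))"

definition is_mono :: "('o, 'm, 'x) cat_scheme \<Rightarrow> 'm \<Rightarrow> bool" where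
  "is_mono C m \<longleftrightarrow> m \<in> Ar C \<and>
     (\<forall>f\<in>Ar C. \<forall>g\<in>Ar C. dm C f = dm C g \<longrightarrow> cd C f = dm C m \<longrightarrow> cd C g = dm C m \<longrightarrow>
        cmp C m f = cmp C m g \<longrightarrow> f = g)"

text \<open>The square \<open>m \<circ> f' = f \<circ> m'\<close> with \<open>m : M \<rightarrow> P\<close>, \<open>f : Q \<rightarrow> P\<close>,
  \<open>m' : Q' \<rightarrow> Q\<close>, \<open>f' : Q' \<rightarrow> M\<close> is a pullback (so \<open>m'\<close> is the pullback of \<open>m\<close> along \<open>f\<close>).\<close>
definition is_pullback :: "('o, 'm, 'x) cat_scheme \<Rightarrow> 'm \<Rightarrow> 'm \<Rightarrow> 'm \<Rightarrow> 'm \<Rightarrow> bool" where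
  "is_pullback C m f m' f' \<longleftrightarrow>
     m \<in> Ar C \<and> f \<in> Ar C \<and> m' \<in> Ar C \<and> f' \<in> Ar C \<and>
     cd C m = cd C f \<and> cd C m' = dm C f \<and> cd C f' = dm C m \<and> dm C m' = dm C f' \<and>
     cmp C m f' = cmp C f m' \<and>
     (\<forall>Z\<in>Ob C. \<forall>a b. a \<in> Hom C Z (dm C f) \<longrightarrow> b \<in> Hom C Z (dm C m) \<longrightarrow>
        cmp C f a = cmp C m b \<longrightarrow>
        (\<exists>!u. u \<in> Hom C Z (dm C m') \<and> cmp C m' u = a \<and> cmp C f' u = b))"

section \<open>Liability categories\<close>

record ('o, 'm) lcat = "('o, 'm) cat" +
  one  :: "'o"
  le   :: "'o \<Rightarrow> 'm \<Rightarrow> 'm \<Rightarrow> bool"        (* partial order on Hom(1,P) *)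
  cons :: "'o \<Rightarrow> 'm set"                  (* constraint subobjects S_P *)
  bsel :: "'o \<Rightarrow> 'm \<Rightarrow> 'm"               (* bound selector beta_P *)

definition is_liability_category :: "('o, 'm, 'x) lcat_scheme \<Rightarrow> bool" where
  "is_liability_category D \<longleftrightarrow>
     \<comment> \<open>(1)\<close>
     is_category D \<and> is_terminal D (one D) \<and> has_finite_products D \<and> has_equalizers D \<and>
     \<comment> \<open>(2)\<close>
     (\<forall>P\<in>Ob D.
        (\<forall>x\<in>Hom D (one D) P. le D P x x) \<and>
        (\<forall>x\<in>Hom D (one D) P. \<forall>y\<in>Hom D (one D) P. le D P x y \<longrightarrow> le D P y x \<longrightarrow> x = y) \<and>
        (\<forall>x\<in>Hom D (one D) P. \<forall>y\<in>Hom D (one D) P. \<forall>z\<in>Hom D (one D) P.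
            le D P x y \<longrightarrow> le D P y z \<longrightarrow> le D P x z)) \<and>
     (\<forall>f\<in>Ar D. \<forall>x\<in>Hom D (one D) (dm D f). \<forall>y\<in>Hom D (one D) (dm D f).
        le D (dm D f) x y \<longrightarrow> le D (cd D f) (cmp D f x) (cmp D f y)) \<and>
     \<comment> \<open>(3)\<close>
     (\<forall>P\<in>Ob D. \<forall>m\<in>cons D P. is_mono D m \<and> cd D m = P) \<and>
     (\<forall>P\<in>Ob D. \<forall>m\<in>cons D P. \<forall>f m' f'. cd D f = P \<longrightarrow> is_pullback D m f m' f' \<longrightarrow>
        m' \<in> cons D (dm D f)) \<and>
     \<comment> \<open>(4)\<close>
     (\<forall>P\<in>Ob D. \<forall>x\<in>Hom D (one D) P. bsel D P x \<in> cons D P) \<and>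
     \<comment> \<open>(5) (bijectivity is automatic from the universal property)\<close>
     (\<forall>(I :: nat set) F Pr \<pi>. finite I \<longrightarrow> is_product D I F Pr \<pi> \<longrightarrow>
        (\<forall>x\<in>Hom D (one D) Pr. \<forall>y\<in>Hom D (one D) Pr.
           le D Pr x y \<longleftrightarrow> (\<forall>i\<in>I. le D (F i) (cmp D (\<pi> i) x) (cmp D (\<pi> i) y))))"

section \<open>Liability networks\<close>

record ('o, 'm, 'v, 'e) lnet =
  nV     :: "'v set"
  nE     :: "'e set"
  src    :: "'e \<Rightarrow> 'v"
  tgt    :: "'e \<Rightarrow> 'v"
  nX     :: "'v \<Rightarrow> 'o"
  nlam   :: "'e \<Rightarrow> 'm"
  niota  :: "'v \<Rightarrow> 'm"
  ndelta :: "'e \<Rightarrow> 'm"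
  nahat  :: "'v \<Rightarrow> 'm"
  nPin   :: "'v \<Rightarrow> 'o"          (* chosen product \<Prod>_{t(e)=v} X_{s(e)}^{lambda_e} *)
  npin   :: "'v \<Rightarrow> 'e \<Rightarrow> 'm"
  nXP    :: "'v \<Rightarrow> 'o"          (* chosen product X_v \<times> \<Prod>_{t(e)=v} ... *)
  npr1   :: "'v \<Rightarrow> 'm"
  npr2   :: "'v \<Rightarrow> 'm"

text \<open>\<open>X_{s(e)}^{\<lambda>_e}\<close> = domain of \<open>\<beta>_{X_{s(e)}}(\<lambda>_e)\<close>.\<close>
definition Xlam :: "('o, 'm, 'x) lcat_scheme \<Rightarrow> ('o, 'm, 'v, 'e, 'y) lnet_scheme \<Rightarrow> 'e \<Rightarrow> 'o" where
  "Xlam D N e = dm D (bsel D (nX N (src N e)) (nlam N e))"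

definition in_edges :: "('o, 'm, 'v, 'e, 'y) lnet_scheme \<Rightarrow> 'v \<Rightarrow> 'e set" where
  "in_edges N v = {e \<in> nE N. tgt N e = v}"

definition is_liability_network ::
  "('o, 'm, 'x) lcat_scheme \<Rightarrow> ('o, 'm, 'v, 'e, 'y) lnet_scheme \<Rightarrow> bool" where
  "is_liability_network D N \<longleftrightarrow>
     finite (nV N) \<and> finite (nE N) \<and>
     (\<forall>e\<in>nE N. src N e \<in> nV N \<and> tgt N e \<in> nV N) \<and>
     (\<forall>v\<in>nV N. nX N v \<in> Ob D) \<and>
     (\<forall>e\<in>nE N. nlam N e \<in> Hom D (one D) (nX N (src N e))) \<and>
     (\<forall>v\<in>nV N. niota N v \<in> Hom D (one D) (nX N v)) \<and>
     (\<forall>e\<in>nE N. ndelta N e \<in> Hom D (nX N (src N e)) (Xlam D N e)) \<and>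
     (\<forall>v\<in>nV N. is_product D (in_edges N v) (Xlam D N) (nPin N v) (npin N v)) \<and>
     (\<forall>v\<in>nV N. is_binprod D (nX N v) (nPin N v) (nXP N v) (npr1 N v) (npr2 N v)) \<and>
     (\<forall>v\<in>nV N. nahat N v \<in> Hom D (nXP N v) (nX N v))"

definition bang :: "('o, 'm, 'x) lcat_scheme \<Rightarrow> 'o \<Rightarrow> 'm" where
  "bang D Z = (THE f. f \<in> Hom D Z (one D))"

text \<open>Partial aggregator \<open>\<alpha>_v = \<hat>\<alpha>_v \<circ> (\<iota>_v \<times> id)\<close>, read (via \<open>1 \<times> Y \<cong> Y\<close>) as
  \<open>\<hat>\<alpha>_v \<circ> \<langle>\<iota>_v \<circ> !, id\<rangle> : \<Prod>_{t(e)=v} X^{\<lambda>_e} \<rightarrow> X_v\<close>.\<close>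
definition palpha :: "('o, 'm, 'x) lcat_scheme \<Rightarrow> ('o, 'm, 'v, 'e, 'y) lnet_scheme \<Rightarrow> 'v \<Rightarrow> 'm" where
  "palpha D N v = cmp D (nahat N v)
     (THE u. u \<in> Hom D (nPin N v) (nXP N v) \<and>
             cmp D (npr1 N v) u = cmp D (niota N v) (bang D (nPin N v)) \<and>
             cmp D (npr2 N v) u = idm D (nPin N v))"

section \<open>Liability hypergraph, incidence category and liability sheaf\<close>

datatype ('v, 'e) hnode = NV 'v | NE 'e | HD 'v | HA 'v
  (* NV v = vertex v;  NE e = e*;  HD v = hyperedge h_v^delta;  HA v = hyperedge h_v^alpha *)

definition inc_nodes :: "('o, 'm, 'v, 'e, 'y) lnet_scheme \<Rightarrow> ('v, 'e) hnode set" where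
  "inc_nodes N = NV ` nV N \<union> NE ` nE N \<union> HD ` nV N \<union> HA ` nV N"

text \<open>Incidences \<open>h \<rightarrow> w\<close> (the non-identity morphisms of \<open>\<I>(\<H>_G)\<close>).\<close>
definition incidences :: "('o, 'm, 'v, 'e, 'y) lnet_scheme \<Rightarrow> (('v, 'e) hnode \<times> ('v, 'e) hnode) set" where
  "incidences N =
     {(HD v, NV v) | v. v \<in> nV N} \<union>
     {(HD (src N e), NE e) | e. e \<in> nE N} \<union>
     {(HA (tgt N e), NE e) | e. e \<in> nE N} \<union>
     {(HA v, NV v) | v. v \<in> nV N}"

definition stalk :: "('o, 'm, 'x) lcat_scheme \<Rightarrow> ('o, 'm, 'v, 'e, 'y) lnet_scheme \<Rightarrow> ('v, 'e) hnode \<Rightarrow> 'o" where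
  "stalk D N h = (case h of NV v \<Rightarrow> nX N v | HD v \<Rightarrow> nX N v | NE e \<Rightarrow> Xlam D N e | HA v \<Rightarrow> nPin N v)"

definition restr :: "('o, 'm, 'x) lcat_scheme \<Rightarrow> ('o, 'm, 'v, 'e, 'y) lnet_scheme \<Rightarrow>
    ('v, 'e) hnode \<Rightarrow> ('v, 'e) hnode \<Rightarrow> 'm" where
  "restr D N h w = (case (h, w) of
       (HD v, NV _) \<Rightarrow> idm D (nX N v)
     | (HD _, NE e) \<Rightarrow> ndelta N e
     | (HA v, NE e) \<Rightarrow> npin N v e
     | (HA v, NV _) \<Rightarrow> palpha D N v
     | _ \<Rightarrow> undefined)"

text \<open>\<open>(L, p)\<close> is a limit of a diagram whose shape category has objects \<open>J\<close> and, besides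
  identities, exactly one morphism \<open>h \<rightarrow> w\<close> for each \<open>(h, w) \<in> R\<close> and no non-trivial composites
  (so a functor on it is given by \<open>Fo\<close> on objects and \<open>Fm\<close> on the generating morphisms).\<close>
definition is_limit ::
  "('o, 'm, 'x) cat_scheme \<Rightarrow> 'j set \<Rightarrow> ('j \<times> 'j) set \<Rightarrow> ('j \<Rightarrow> 'o) \<Rightarrow> ('j \<Rightarrow> 'j \<Rightarrow> 'm)
     \<Rightarrow> 'o \<Rightarrow> ('j \<Rightarrow> 'm) \<Rightarrow> bool" where
  "is_limit C J R Fo Fm L p \<longleftrightarrow>
     L \<in> Ob C \<and> (\<forall>j\<in>J. p j \<in> Hom C L (Fo j)) \<and>
     (\<forall>(h, w)\<in>R. cmp C (Fm h w) (p h) = p w) \<and>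
     (\<forall>Z\<in>Ob C. \<forall>q. (\<forall>j\<in>J. q j \<in> Hom C Z (Fo j)) \<longrightarrow> (\<forall>(h, w)\<in>R. cmp C (Fm h w) (q h) = q w) \<longrightarrow>
        (\<exists>!u. u \<in> Hom C Z L \<and> (\<forall>j\<in>J. cmp C (p j) u = q j)))"

definition is_H0 :: "('o, 'm, 'x) lcat_scheme \<Rightarrow> ('o, 'm, 'v, 'e, 'y) lnet_scheme \<Rightarrow>
    'o \<Rightarrow> (('v, 'e) hnode \<Rightarrow> 'm) \<Rightarrow> bool" where
  "is_H0 D N L p \<longleftrightarrow> is_limit D (inc_nodes N) (incidences N) (stalk D N) (restr D N) L p"

definition Fix :: "('o, 'm, 'x) lcat_scheme \<Rightarrow> 'm \<Rightarrow> 'm set" where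
  "Fix D \<Theta> = {\<rho> \<in> Hom D (one D) (dm D \<Theta>). cmp D \<Theta> \<rho> = \<rho>}"

definition tuple :: "('o, 'm, 'x) cat_scheme \<Rightarrow> 'i set \<Rightarrow> 'o \<Rightarrow> ('i \<Rightarrow> 'm) \<Rightarrow> 'o \<Rightarrow> ('i \<Rightarrow> 'm) \<Rightarrow> 'm" where
  "tuple C I P \<pi> Z f = (THE u. u \<in> Hom C Z P \<and> (\<forall>i\<in>I. cmp C (\<pi> i) u = f i))"

end

(*
  Both isomorphisms rest on one observation: for f : a -> b and g : b -> a, if e equalizes
  id and g f then f e equalizes id and f g, so Eq(id_a, g f) and Eq(id_b, f g) are isomorphic via
  f and g; on global elements this is the bijection between the fixed points of g f and f g.

  For H^0, a cone over the liability sheaf is determined by its edge components b : Z -> B: the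
  incidences at the hyperedges h_v^alpha force the vertex components to be A b, and those at
  h_v^delta then say exactly that D (A b) = b. Hence cones with vertex Z correspond to morphisms
  Z -> B fixed by D A, so Eq(id_B, D A) is itself a limit of the sheaf, and limits are unique up
  to isomorphism.
*)
theory Submission
  imports Defs
begin

abbreviation cat_comp :: "('o, 'm, 'x) cat_scheme \<Rightarrow> 'm \<Rightarrow> 'm \<Rightarrow> 'm"  (infixr \<open>\<cdot>\<index>\<close> 55)
  where "g \<cdot>\<^bsub>C\<^esub> f \<equiv> cmp C g f"

definition is_cone ::
  "('o, 'm, 'x) cat_scheme \<Rightarrow> 'j set \<Rightarrow> ('j \<times> 'j) set \<Rightarrow> ('j \<Rightarrow> 'o) \<Rightarrow> ('j \<Rightarrow> 'j \<Rightarrow> 'm)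
     \<Rightarrow> 'o \<Rightarrow> ('j \<Rightarrow> 'm) \<Rightarrow> bool" where
  "is_cone C J R Fo Fm Z q \<longleftrightarrow>
     Z \<in> Ob C \<and> (\<forall>j\<in>J. q j \<in> Hom C Z (Fo j)) \<and> (\<forall>(h, w)\<in>R. Fm h w \<cdot>\<^bsub>C\<^esub> q h = q w)"

lemma is_limit_iff_cone:
  "is_limit C J R Fo Fm L p \<longleftrightarrow> is_cone C J R Fo Fm L p \<and>
     (\<forall>Z q. is_cone C J R Fo Fm Z q \<longrightarrow> (\<exists>!u. u \<in> Hom C Z L \<and> (\<forall>j\<in>J. p j \<cdot>\<^bsub>C\<^esub> u = q j)))"
  unfolding is_limit_def is_cone_def by blast

locale category =
  fixes C :: "('o, 'm, 'x) cat_scheme" (structure)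
  assumes is_category: "is_category C"
begin

lemma Hom_Ob: "f \<in> Hom C a b \<Longrightarrow> a \<in> Ob C \<and> b \<in> Ob C"
  using is_category by (auto simp: is_category_def Hom_def)

lemma id_in_Hom: "a \<in> Ob C \<Longrightarrow> idm C a \<in> Hom C a a"
  using is_category by (auto simp: is_category_def)

lemma comp_in_Hom: "f \<in> Hom C a b \<Longrightarrow> g \<in> Hom C b c \<Longrightarrow> g \<cdot> f \<in> Hom C a c"
  using is_category by (auto simp: is_category_def Hom_def)

lemma comp_assoc:
  "f \<in> Hom C a b \<Longrightarrow> g \<in> Hom C b c \<Longrightarrow> h \<in> Hom C c d \<Longrightarrow> h \<cdot> g \<cdot> f = (h \<cdot> g) \<cdot> f"
  using is_category by (auto simp: is_category_def Hom_def)

lemma id_comp: "f \<in> Hom C a b \<Longrightarrow> idm C b \<cdot> f = f"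
  using is_category by (auto simp: is_category_def Hom_def)

lemma comp_id: "f \<in> Hom C a b \<Longrightarrow> f \<cdot> idm C a = f"
  using is_category by (auto simp: is_category_def Hom_def)

lemma product_Ob: "is_product C I F P \<pi> \<Longrightarrow> P \<in> Ob C"
  unfolding is_product_def by blast

lemma product_proj_in_Hom: "is_product C I F P \<pi> \<Longrightarrow> i \<in> I \<Longrightarrow> \<pi> i \<in> Hom C P (F i)"
  unfolding is_product_def by blast

lemma tuple_universal:
  assumes "is_product C I F P \<pi>" and "Z \<in> Ob C" and "\<forall>i\<in>I. f i \<in> Hom C Z (F i)"
  shows "tuple C I P \<pi> Z f \<in> Hom C Z P" and "\<forall>i\<in>I. \<pi> i \<cdot> tuple C I P \<pi> Z f = f i"
proof -
  have "\<exists>!u. u \<in> Hom C Z P \<and> (\<forall>i\<in>I. \<pi> i \<cdot> u = f i)"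
    using assms unfolding is_product_def by blast
  then have "tuple C I P \<pi> Z f \<in> Hom C Z P \<and> (\<forall>i\<in>I. \<pi> i \<cdot> tuple C I P \<pi> Z f = f i)"
    unfolding tuple_def by (rule theI')
  then show "tuple C I P \<pi> Z f \<in> Hom C Z P" and "\<forall>i\<in>I. \<pi> i \<cdot> tuple C I P \<pi> Z f = f i"
    by auto
qed

lemma product_eqI:
  assumes prod: "is_product C I F P \<pi>" and u: "u \<in> Hom C Z P" and u': "u' \<in> Hom C Z P"
    and eq: "\<forall>i\<in>I. \<pi> i \<cdot> u = \<pi> i \<cdot> u'"
  shows "u = u'"
proof -
  have univ: "\<And>f. \<forall>i\<in>I. f i \<in> Hom C Z (F i) \<Longrightarrow> \<exists>!w. w \<in> Hom C Z P \<and> (\<forall>i\<in>I. \<pi> i \<cdot> w = f i)"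
    using prod Hom_Ob[OF u] unfolding is_product_def by blast
  have "\<forall>i\<in>I. \<pi> i \<cdot> u \<in> Hom C Z (F i)"
    using comp_in_Hom[OF u product_proj_in_Hom[OF prod]] by blast
  then have "\<exists>!w. w \<in> Hom C Z P \<and> (\<forall>i\<in>I. \<pi> i \<cdot> w = \<pi> i \<cdot> u)"
    by (rule univ)
  then show ?thesis using u u' eq by metis
qed

lemma equalizer_cancel:
  assumes eq: "is_equalizer C f g E k" and u: "u \<in> Hom C Z E" and u': "u' \<in> Hom C Z E"
    and k: "k \<cdot> u = k \<cdot> u'"
  shows "u = u'"
proof -
  have kh: "k \<in> Hom C E (dm C f)" and fk: "f \<cdot> k = g \<cdot> k"
    and fg: "f \<in> Hom C (dm C f) (cd C f)" "g \<in> Hom C (dm C f) (cd C f)"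
    using eq unfolding is_equalizer_def Hom_def by auto
  have "f \<cdot> k \<cdot> u = g \<cdot> k \<cdot> u"
    using comp_assoc[OF u kh fg(1)] comp_assoc[OF u kh fg(2)] fk by simp
  then have "\<exists>!w. w \<in> Hom C Z E \<and> k \<cdot> w = k \<cdot> u"
    using eq Hom_Ob[OF u] comp_in_Hom[OF u kh] unfolding is_equalizer_def by blast
  then show ?thesis using u u' k by metis
qed

lemma equalizer_id_iff:
  assumes h: "h \<in> Hom C a a"
  shows "is_equalizer C (idm C a) h E k \<longleftrightarrow>
    k \<in> Hom C E a \<and> h \<cdot> k = k \<and>
    (\<forall>Z\<in>Ob C. \<forall>x. x \<in> Hom C Z a \<longrightarrow> h \<cdot> x = x \<longrightarrow> (\<exists>!u. u \<in> Hom C Z E \<and> k \<cdot> u = x))"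
proof -
  have ida: "idm C a \<in> Hom C a a" using id_in_Hom Hom_Ob[OF h] by blast
  have ar: "idm C a \<in> Ar C" "h \<in> Ar C" and ends: "dm C (idm C a) = a" "cd C (idm C a) = a"
    "dm C h = a" "cd C h = a" using ida h by (auto simp: Hom_def)
  have id_eq: "idm C a \<cdot> x = h \<cdot> x \<longleftrightarrow> h \<cdot> x = x" if "x \<in> Hom C Z a" for x Z
    using id_comp[OF that] by auto
  have univ_eq: "(\<forall>x. x \<in> Hom C Z a \<longrightarrow> idm C a \<cdot> x = h \<cdot> x \<longrightarrow> Q x) \<longleftrightarrow>
      (\<forall>x. x \<in> Hom C Z a \<longrightarrow> h \<cdot> x = x \<longrightarrow> Q x)" for Z Q
    using id_eq by blast
  show ?thesis
    unfolding is_equalizer_def ends univ_eq using ar id_eq[of k E] by blast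
qed

lemma equalizer_swap:
  assumes f: "f \<in> Hom C a b" and g: "g \<in> Hom C b a"
    and eq: "is_equalizer C (idm C a) (g \<cdot> f) E k"
  shows "is_equalizer C (idm C b) (f \<cdot> g) E (f \<cdot> k)"
proof -
  have gf: "g \<cdot> f \<in> Hom C a a" and fg: "f \<cdot> g \<in> Hom C b b"
    using comp_in_Hom f g by blast+
  have k: "k \<in> Hom C E a" and k_fixed: "(g \<cdot> f) \<cdot> k = k"
    and univ: "\<And>Z x. Z \<in> Ob C \<Longrightarrow> x \<in> Hom C Z a \<Longrightarrow> (g \<cdot> f) \<cdot> x = x \<Longrightarrow>
                  \<exists>!u. u \<in> Hom C Z E \<and> k \<cdot> u = x"
    using eq unfolding equalizer_id_iff[OF gf] by blast+
  have fk: "f \<cdot> k \<in> Hom C E b" using comp_in_Hom[OF k f] .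
  show ?thesis
    unfolding equalizer_id_iff[OF fg]
  proof (intro conjI ballI allI impI fk)
    show "(f \<cdot> g) \<cdot> f \<cdot> k = f \<cdot> k"
      using comp_assoc[OF fk g f] comp_assoc[OF k f g] k_fixed by simp
    fix Z x assume Z: "Z \<in> Ob C" and x: "x \<in> Hom C Z b" and x_fixed: "(f \<cdot> g) \<cdot> x = x"
    have gx: "g \<cdot> x \<in> Hom C Z a" using comp_in_Hom[OF x g] .
    have "(g \<cdot> f) \<cdot> g \<cdot> x = g \<cdot> x"
      using comp_assoc[OF gx f g] comp_assoc[OF x g f] x_fixed by simp
    then obtain u where u: "u \<in> Hom C Z E" and ku: "k \<cdot> u = g \<cdot> x"
      using univ[OF Z gx] by blast
    show "\<exists>!u. u \<in> Hom C Z E \<and> (f \<cdot> k) \<cdot> u = x"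
    proof (rule ex1I[of _ u])
      show "u \<in> Hom C Z E \<and> (f \<cdot> k) \<cdot> u = x"
        using u ku comp_assoc[OF u k f] comp_assoc[OF x g f] x_fixed by simp
    next
      fix u' assume u': "u' \<in> Hom C Z E \<and> (f \<cdot> k) \<cdot> u' = x"
      have "k \<cdot> u' = ((g \<cdot> f) \<cdot> k) \<cdot> u'" using k_fixed by simp
      also have "\<dots> = g \<cdot> (f \<cdot> k) \<cdot> u'"
        using u' comp_assoc[OF _ comp_in_Hom[OF k f] g] comp_assoc[OF k f g] by metis
      finally have "k \<cdot> u' = k \<cdot> u" using u' ku by simp
      then show "u' = u" using equalizer_cancel[OF eq] u u' by blast
    qed
  qed
qed

lemma equalizer_comparison_inverse:
  assumes eq: "is_equalizer C f g E k"
    and d: "d \<in> Hom C E E'" "k' \<cdot> d = k" and d': "d' \<in> Hom C E' E" "k \<cdot> d' = k'"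
  shows "d' \<cdot> d = idm C E"
proof -
  have k: "k \<in> Hom C E (dm C f)" using eq unfolding is_equalizer_def by blast
  have "k \<cdot> d' \<cdot> d = k \<cdot> idm C E"
    using comp_assoc[OF d(1) d'(1) k] d d' comp_id[OF k] by simp
  then show ?thesis
    using equalizer_cancel[OF eq comp_in_Hom[OF d(1) d'(1)]] id_in_Hom Hom_Ob[OF d(1)] by blast
qed

lemma equalizer_unique_iso:
  assumes eq: "is_equalizer C f g E k" and eq': "is_equalizer C f g E' k'"
  obtains d d' where "d \<in> Hom C E E'" "d' \<in> Hom C E' E" "k' \<cdot> d = k" "k \<cdot> d' = k'"
    "d' \<cdot> d = idm C E" "d \<cdot> d' = idm C E'"
proof -
  have factor: "\<exists>d. d \<in> Hom C E E' \<and> k' \<cdot> d = k"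
    if "is_equalizer C f g E k" "is_equalizer C f g E' k'" for E k E' k'
    using that Hom_Ob unfolding is_equalizer_def by blast
  obtain d d' where d: "d \<in> Hom C E E'" "k' \<cdot> d = k" and d': "d' \<in> Hom C E' E" "k \<cdot> d' = k'"
    using factor[OF eq eq'] factor[OF eq' eq] by blast
  show thesis
    using that d d' equalizer_comparison_inverse[OF eq d d'] equalizer_comparison_inverse[OF eq' d' d]
    by blast
qed

lemma equalizer_swap_iso:
  assumes f: "f \<in> Hom C a b" and g: "g \<in> Hom C b a"
    and eq: "is_equalizer C (idm C a) (g \<cdot> f) E k" and eq': "is_equalizer C (idm C b) (f \<cdot> g) E' k'"
  shows "\<exists>d d'. d \<in> Hom C E E' \<and> d' \<in> Hom C E' E \<and> k' \<cdot> d = f \<cdot> k \<and> k \<cdot> d' = g \<cdot> k' \<and>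
           d' \<cdot> d = idm C E \<and> d \<cdot> d' = idm C E'"
proof -
  obtain d d' where d: "d \<in> Hom C E E'" "k' \<cdot> d = f \<cdot> k" and d': "d' \<in> Hom C E' E" "(f \<cdot> k) \<cdot> d' = k'"
    and inv: "d' \<cdot> d = idm C E" "d \<cdot> d' = idm C E'"
    using equalizer_unique_iso[OF equalizer_swap[OF f g eq] eq'] by metis
  have k: "k \<in> Hom C E a" and k_fixed: "(g \<cdot> f) \<cdot> k = k"
    using eq unfolding equalizer_id_iff[OF comp_in_Hom[OF f g]] by blast+
  have "k \<cdot> d' = ((g \<cdot> f) \<cdot> k) \<cdot> d'" using k_fixed by simp
  also have "\<dots> = g \<cdot> (f \<cdot> k) \<cdot> d'"
    using comp_assoc[OF d'(1) comp_in_Hom[OF k f] g] comp_assoc[OF k f g] by simp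
  finally have "k \<cdot> d' = g \<cdot> k'" using d'(2) by simp
  then show ?thesis using d d' inv by blast
qed

lemma limit_comparison_inverse:
  assumes lim: "is_limit C J R Fo Fm L p"
    and f: "f \<in> Hom C L L'" "\<forall>j\<in>J. p' j \<cdot> f = p j"
    and g: "g \<in> Hom C L' L" "\<forall>j\<in>J. p j \<cdot> g = p' j"
  shows "g \<cdot> f = idm C L"
proof -
  have cone: "is_cone C J R Fo Fm L p" using lim unfolding is_limit_iff_cone by blast
  then have p: "\<forall>j\<in>J. p j \<in> Hom C L (Fo j)" and L: "L \<in> Ob C" unfolding is_cone_def by blast+
  have "p j \<cdot> g \<cdot> f = p j" if "j \<in> J" for j
    using comp_assoc[OF f(1) g(1) bspec[OF p that]] f(2) g(2) that by simp
  moreover have "p j \<cdot> idm C L = p j" if "j \<in> J" for j using comp_id p that by blast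
  moreover have "\<exists>!u. u \<in> Hom C L L \<and> (\<forall>j\<in>J. p j \<cdot> u = p j)"
    using lim cone unfolding is_limit_iff_cone by blast
  ultimately show ?thesis using comp_in_Hom[OF f(1) g(1)] id_in_Hom[OF L] by blast
qed

lemma limit_unique_iso:
  assumes lim: "is_limit C J R Fo Fm L p" and lim': "is_limit C J R Fo Fm L' p'"
  shows "\<exists>f g. f \<in> Hom C L L' \<and> g \<in> Hom C L' L \<and> g \<cdot> f = idm C L \<and> f \<cdot> g = idm C L'"
proof -
  have factor: "\<exists>f. f \<in> Hom C L L' \<and> (\<forall>j\<in>J. p' j \<cdot> f = p j)"
    if "is_limit C J R Fo Fm L p" "is_limit C J R Fo Fm L' p'" for L p L' p'
    using that unfolding is_limit_iff_cone by blast
  obtain f g where f: "f \<in> Hom C L L'" "\<forall>j\<in>J. p' j \<cdot> f = p j"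
    and g: "g \<in> Hom C L' L" "\<forall>j\<in>J. p j \<cdot> g = p' j"
    using factor[OF lim lim'] factor[OF lim' lim] by blast
  show ?thesis
    using f g limit_comparison_inverse[OF lim f g] limit_comparison_inverse[OF lim' g f] by blast
qed

end

lemma Fix_comp_swap:
  assumes cat: "is_category D" and f: "f \<in> Hom D a b" and g: "g \<in> Hom D b a"
    and \<rho>: "\<rho> \<in> Fix D (g \<cdot>\<^bsub>D\<^esub> f)"
  shows "f \<cdot>\<^bsub>D\<^esub> \<rho> \<in> Fix D (f \<cdot>\<^bsub>D\<^esub> g)" and "g \<cdot>\<^bsub>D\<^esub> f \<cdot>\<^bsub>D\<^esub> \<rho> = \<rho>"
proof -
  interpret category D by (rule category.intro) (fact cat)
  have gf: "g \<cdot>\<^bsub>D\<^esub> f \<in> Hom D a a" and fg: "f \<cdot>\<^bsub>D\<^esub> g \<in> Hom D b b" using comp_in_Hom f g by blast+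
  have \<rho>_Hom: "\<rho> \<in> Hom D (one D) a" and \<rho>_fixed: "(g \<cdot>\<^bsub>D\<^esub> f) \<cdot>\<^bsub>D\<^esub> \<rho> = \<rho>"
    using \<rho> gf unfolding Fix_def Hom_def by auto
  show cancel: "g \<cdot>\<^bsub>D\<^esub> f \<cdot>\<^bsub>D\<^esub> \<rho> = \<rho>" using comp_assoc[OF \<rho>_Hom f g] \<rho>_fixed by simp
  have f\<rho>: "f \<cdot>\<^bsub>D\<^esub> \<rho> \<in> Hom D (one D) b" using comp_in_Hom[OF \<rho>_Hom f] .
  have "(f \<cdot>\<^bsub>D\<^esub> g) \<cdot>\<^bsub>D\<^esub> f \<cdot>\<^bsub>D\<^esub> \<rho> = f \<cdot>\<^bsub>D\<^esub> \<rho>"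
    using comp_assoc[OF f\<rho> g f] cancel by simp
  then show "f \<cdot>\<^bsub>D\<^esub> \<rho> \<in> Fix D (f \<cdot>\<^bsub>D\<^esub> g)" using f\<rho> fg unfolding Fix_def Hom_def by auto
qed

lemma Fix_comp_bij:
  assumes "is_category D" and "f \<in> Hom D a b" and "g \<in> Hom D b a"
  shows "bij_betw (\<lambda>\<rho>. f \<cdot>\<^bsub>D\<^esub> \<rho>) (Fix D (g \<cdot>\<^bsub>D\<^esub> f)) (Fix D (f \<cdot>\<^bsub>D\<^esub> g))"
  by (rule bij_betw_byWitness[where f' = "\<lambda>\<sigma>. g \<cdot>\<^bsub>D\<^esub> \<sigma>"])
    (use Fix_comp_swap[OF assms] Fix_comp_swap[OF assms(1,3,2)] in auto)

locale liability_operators =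
  fixes D :: "('o, 'm) lcat" (structure)
    and N :: "('o, 'm, 'v, 'e) lnet"
    and P B :: 'o
    and \<pi>P :: "'v \<Rightarrow> 'm" and \<pi>B :: "'e \<Rightarrow> 'm"
    and Dm Am :: 'm
  assumes LC: "is_liability_category D"
    and LN: "is_liability_network D N"
    and Pprod: "is_product D (nV N) (nX N) P \<pi>P"
    and Bprod: "is_product D (nE N) (Xlam D N) B \<pi>B"
    and Dm_hom: "Dm \<in> Hom D P B"
    and Dm_comp: "\<forall>e\<in>nE N. \<pi>B e \<cdot> Dm = ndelta N e \<cdot> \<pi>P (src N e)"
    and Am_hom: "Am \<in> Hom D B P"
    and Am_comp: "\<forall>v\<in>nV N. \<pi>P v \<cdot> Am = palpha D N v \<cdot> tuple D (in_edges N v) (nPin N v) (npin N v) B \<pi>B"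

sublocale liability_operators \<subseteq> category D
  using LC unfolding is_liability_category_def by unfold_locales blast

context liability_operators
begin

lemma src_in_V: "e \<in> nE N \<Longrightarrow> src N e \<in> nV N"
  and tgt_in_V: "e \<in> nE N \<Longrightarrow> tgt N e \<in> nV N"
  and delta_in_Hom: "e \<in> nE N \<Longrightarrow> ndelta N e \<in> Hom D (nX N (src N e)) (Xlam D N e)"
  and in_product: "v \<in> nV N \<Longrightarrow> is_product D (in_edges N v) (Xlam D N) (nPin N v) (npin N v)"
  using LN unfolding is_liability_network_def by auto

lemma bang_in_Hom:
  assumes "Z \<in> Ob D"
  shows "bang D Z \<in> Hom D Z (one D)"
proof -
  have "is_terminal D (one D)" using LC unfolding is_liability_category_def by blast
  then have "\<exists>!f. f \<in> Hom D Z (one D)" using assms unfolding is_terminal_def by blast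
  then show ?thesis unfolding bang_def by (rule theI')
qed

lemma palpha_in_Hom:
  assumes v: "v \<in> nV N"
  shows "palpha D N v \<in> Hom D (nPin N v) (nX N v)"
proof -
  have binprod: "is_binprod D (nX N v) (nPin N v) (nXP N v) (npr1 N v) (npr2 N v)"
    and ahat: "nahat N v \<in> Hom D (nXP N v) (nX N v)"
    and iota: "niota N v \<in> Hom D (one D) (nX N v)"
    using LN v unfolding is_liability_network_def by blast+
  have Pin: "nPin N v \<in> Ob D" using product_Ob[OF in_product[OF v]] .
  have "\<exists>!u. u \<in> Hom D (nPin N v) (nXP N v) \<and>
          npr1 N v \<cdot> u = niota N v \<cdot> bang D (nPin N v) \<and> npr2 N v \<cdot> u = idm D (nPin N v)"
    using binprod Pin comp_in_Hom[OF bang_in_Hom[OF Pin] iota] id_in_Hom[OF Pin]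
    unfolding is_binprod_def by blast
  then have "(THE u. u \<in> Hom D (nPin N v) (nXP N v) \<and>
          npr1 N v \<cdot> u = niota N v \<cdot> bang D (nPin N v) \<and> npr2 N v \<cdot> u = idm D (nPin N v))
        \<in> Hom D (nPin N v) (nXP N v)"
    by (rule the1I2) blast
  then show ?thesis unfolding palpha_def using comp_in_Hom[OF _ ahat] by blast
qed

lemma proj_P_in_Hom: "v \<in> nV N \<Longrightarrow> \<pi>P v \<in> Hom D P (nX N v)"
  using product_proj_in_Hom[OF Pprod] .

lemma proj_B_in_Hom: "e \<in> nE N \<Longrightarrow> \<pi>B e \<in> Hom D B (Xlam D N e)"
  using product_proj_in_Hom[OF Bprod] .

lemma npin_in_Hom: "v \<in> nV N \<Longrightarrow> e \<in> in_edges N v \<Longrightarrow> npin N v e \<in> Hom D (nPin N v) (Xlam D N e)"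
  using product_proj_in_Hom[OF in_product] .

lemma in_edges_tgt: "e \<in> nE N \<Longrightarrow> e \<in> in_edges N (tgt N e)"
  by (simp add: in_edges_def)

definition incoming :: "'v \<Rightarrow> 'm" where
  "incoming v = tuple D (in_edges N v) (nPin N v) (npin N v) B \<pi>B"

lemma incoming_in_Hom: "v \<in> nV N \<Longrightarrow> incoming v \<in> Hom D B (nPin N v)"
  and npin_comp_incoming: "v \<in> nV N \<Longrightarrow> e \<in> in_edges N v \<Longrightarrow> npin N v e \<cdot> incoming v = \<pi>B e"
  unfolding incoming_def
  using tuple_universal[OF in_product product_Ob[OF Bprod], of v \<pi>B]
    product_proj_in_Hom[OF Bprod] by (auto simp: in_edges_def)

lemma proj_P_comp_Am: "v \<in> nV N \<Longrightarrow> \<pi>P v \<cdot> Am = palpha D N v \<cdot> incoming v"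
  using Am_comp unfolding incoming_def by blast

abbreviation sheaf_cone :: "'o \<Rightarrow> (('v, 'e) hnode \<Rightarrow> 'm) \<Rightarrow> bool" where
  "sheaf_cone \<equiv> is_cone D (inc_nodes N) (incidences N) (stalk D N) (restr D N)"

lemma incidence_equations_iff:
  "(\<forall>(h, w)\<in>incidences N. restr D N h w \<cdot> q h = q w) \<longleftrightarrow>
     (\<forall>v\<in>nV N. idm D (nX N v) \<cdot> q (HD v) = q (NV v) \<and>
               palpha D N v \<cdot> q (HA v) = q (NV v)) \<and>
     (\<forall>e\<in>nE N. ndelta N e \<cdot> q (HD (src N e)) = q (NE e) \<and>
               npin N (tgt N e) e \<cdot> q (HA (tgt N e)) = q (NE e))"
  unfolding incidences_def Setcompr_eq_image ball_Un by (auto simp: restr_def)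

lemma sheaf_cone_iff:
  "sheaf_cone Z q \<longleftrightarrow> Z \<in> Ob D \<and>
     (\<forall>v\<in>nV N. q (NV v) \<in> Hom D Z (nX N v) \<and> q (HD v) = q (NV v) \<and>
               q (HA v) \<in> Hom D Z (nPin N v) \<and> palpha D N v \<cdot> q (HA v) = q (NV v)) \<and>
     (\<forall>e\<in>nE N. q (NE e) \<in> Hom D Z (Xlam D N e) \<and> ndelta N e \<cdot> q (NV (src N e)) = q (NE e) \<and>
               npin N (tgt N e) e \<cdot> q (HA (tgt N e)) = q (NE e))"
proof -
  have stalks: "(\<forall>j\<in>inc_nodes N. q j \<in> Hom D Z (stalk D N j)) \<longleftrightarrow>
      (\<forall>v\<in>nV N. q (NV v) \<in> Hom D Z (nX N v) \<and> q (HD v) \<in> Hom D Z (nX N v) \<and>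
                q (HA v) \<in> Hom D Z (nPin N v)) \<and>
      (\<forall>e\<in>nE N. q (NE e) \<in> Hom D Z (Xlam D N e))"
    unfolding inc_nodes_def ball_Un Ball_image_comp by (auto simp: stalk_def)
  have HD_iff: "(\<forall>v\<in>nV N. q (HD v) \<in> Hom D Z (nX N v) \<and> idm D (nX N v) \<cdot> q (HD v) = q (NV v)) \<longleftrightarrow>
      (\<forall>v\<in>nV N. q (HD v) = q (NV v))"
    if "\<forall>v\<in>nV N. q (NV v) \<in> Hom D Z (nX N v)"
    using that id_comp by fastforce
  have src_iff: "(\<forall>e\<in>nE N. ndelta N e \<cdot> q (HD (src N e)) = q (NE e)) \<longleftrightarrow>
      (\<forall>e\<in>nE N. ndelta N e \<cdot> q (NV (src N e)) = q (NE e))"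
    if "\<forall>v\<in>nV N. q (HD v) = q (NV v)"
    using that src_in_V by auto
  show ?thesis
    unfolding is_cone_def stalks incidence_equations_iff ball_conj_distrib
    using HD_iff src_iff by blast
qed

definition edge_cone :: "'m \<Rightarrow> ('v, 'e) hnode \<Rightarrow> 'm" where
  "edge_cone x j = (case j of
       NV v \<Rightarrow> \<pi>P v \<cdot> Am \<cdot> x
     | HD v \<Rightarrow> \<pi>P v \<cdot> Am \<cdot> x
     | NE e \<Rightarrow> \<pi>B e \<cdot> x
     | HA v \<Rightarrow> incoming v \<cdot> x)"

lemma edge_cone_sheaf_cone:
  assumes x: "x \<in> Hom D Z B" and fixed: "(Dm \<cdot> Am) \<cdot> x = x"
  shows "sheaf_cone Z (edge_cone x)"
  unfolding sheaf_cone_iff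
proof (intro conjI ballI)
  show "Z \<in> Ob D" using Hom_Ob[OF x] by blast
next
  have Ax: "Am \<cdot> x \<in> Hom D Z P" using comp_in_Hom[OF x Am_hom] .
  fix v assume v: "v \<in> nV N"
  show "edge_cone x (NV v) \<in> Hom D Z (nX N v)"
    using comp_in_Hom[OF Ax proj_P_in_Hom[OF v]] by (simp add: edge_cone_def)
  show "edge_cone x (HD v) = edge_cone x (NV v)" by (simp add: edge_cone_def)
  show "edge_cone x (HA v) \<in> Hom D Z (nPin N v)"
    using comp_in_Hom[OF x incoming_in_Hom[OF v]] by (simp add: edge_cone_def)
  show "palpha D N v \<cdot> edge_cone x (HA v) = edge_cone x (NV v)"
    using comp_assoc[OF x incoming_in_Hom[OF v] palpha_in_Hom[OF v]]
      comp_assoc[OF x Am_hom proj_P_in_Hom[OF v]] proj_P_comp_Am[OF v]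
    by (simp add: edge_cone_def)
next
  have Ax: "Am \<cdot> x \<in> Hom D Z P" using comp_in_Hom[OF x Am_hom] .
  fix e assume e: "e \<in> nE N"
  show "edge_cone x (NE e) \<in> Hom D Z (Xlam D N e)"
    using comp_in_Hom[OF x proj_B_in_Hom[OF e]] by (simp add: edge_cone_def)
  have "ndelta N e \<cdot> \<pi>P (src N e) \<cdot> Am \<cdot> x = (ndelta N e \<cdot> \<pi>P (src N e)) \<cdot> Am \<cdot> x"
    using comp_assoc[OF Ax proj_P_in_Hom[OF src_in_V[OF e]] delta_in_Hom[OF e]] .
  also have "\<dots> = (\<pi>B e \<cdot> Dm) \<cdot> Am \<cdot> x" using Dm_comp e by simp
  also have "\<dots> = \<pi>B e \<cdot> Dm \<cdot> Am \<cdot> x" using comp_assoc[OF Ax Dm_hom proj_B_in_Hom[OF e]] by simp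
  also have "\<dots> = \<pi>B e \<cdot> x" using comp_assoc[OF x Am_hom Dm_hom] fixed by simp
  finally show "ndelta N e \<cdot> edge_cone x (NV (src N e)) = edge_cone x (NE e)"
    by (simp add: edge_cone_def)
  show "npin N (tgt N e) e \<cdot> edge_cone x (HA (tgt N e)) = edge_cone x (NE e)"
    using comp_assoc[OF x incoming_in_Hom[OF tgt_in_V[OF e]] npin_in_Hom[OF tgt_in_V[OF e] in_edges_tgt[OF e]]]
      npin_comp_incoming[OF tgt_in_V[OF e] in_edges_tgt[OF e]]
    by (simp add: edge_cone_def)
qed

lemma edge_cone_comp:
  assumes x: "x \<in> Hom D Z B" and u: "u \<in> Hom D Y Z" and j: "j \<in> inc_nodes N"
  shows "edge_cone x j \<cdot> u = edge_cone (x \<cdot> u) j"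
proof -
  have Ax: "Am \<cdot> x \<in> Hom D Z P" using comp_in_Hom[OF x Am_hom] .
  from j consider (vertex) v where "v \<in> nV N" "j = NV v \<or> j = HD v"
    | (edge) e where "e \<in> nE N" "j = NE e"
    | (inflow) v where "v \<in> nV N" "j = HA v"
    unfolding inc_nodes_def by blast
  then show ?thesis
  proof cases
    case vertex
    then show ?thesis
      using comp_assoc[OF u Ax proj_P_in_Hom] comp_assoc[OF u x Am_hom]
      by (auto simp: edge_cone_def)
  next
    case edge
    then show ?thesis using comp_assoc[OF u x proj_B_in_Hom] by (simp add: edge_cone_def)
  next
    case inflow
    then show ?thesis using comp_assoc[OF u x incoming_in_Hom] by (simp add: edge_cone_def)
  qed
qed

definition edge_tuple :: "'o \<Rightarrow> (('v, 'e) hnode \<Rightarrow> 'm) \<Rightarrow> 'm" where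
  "edge_tuple Z q = tuple D (nE N) B \<pi>B Z (\<lambda>e. q (NE e))"

lemma edge_tuple_in_Hom: "sheaf_cone Z q \<Longrightarrow> edge_tuple Z q \<in> Hom D Z B"
  and proj_B_comp_edge_tuple: "sheaf_cone Z q \<Longrightarrow> e \<in> nE N \<Longrightarrow> \<pi>B e \<cdot> edge_tuple Z q = q (NE e)"
  unfolding sheaf_cone_iff edge_tuple_def
  using tuple_universal[OF Bprod, of Z "\<lambda>e. q (NE e)"] by auto

lemma incoming_comp_edge_tuple:
  assumes q: "sheaf_cone Z q" and v: "v \<in> nV N"
  shows "incoming v \<cdot> edge_tuple Z q = q (HA v)"
proof (rule product_eqI[OF in_product[OF v]])
  have b: "edge_tuple Z q \<in> Hom D Z B" using edge_tuple_in_Hom[OF q] .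
  show "incoming v \<cdot> edge_tuple Z q \<in> Hom D Z (nPin N v)"
    using comp_in_Hom[OF b incoming_in_Hom[OF v]] .
  show "q (HA v) \<in> Hom D Z (nPin N v)" using q v unfolding sheaf_cone_iff by blast
  show "\<forall>e\<in>in_edges N v. npin N v e \<cdot> incoming v \<cdot> edge_tuple Z q = npin N v e \<cdot> q (HA v)"
  proof
    fix e assume e_in: "e \<in> in_edges N v"
    then have e: "e \<in> nE N" and v_tgt: "v = tgt N e" by (auto simp: in_edges_def)
    have "npin N v e \<cdot> incoming v \<cdot> edge_tuple Z q = (npin N v e \<cdot> incoming v) \<cdot> edge_tuple Z q"
      using comp_assoc[OF b incoming_in_Hom[OF v] npin_in_Hom[OF v e_in]] .
    also have "\<dots> = q (NE e)"
      using npin_comp_incoming[OF v e_in] proj_B_comp_edge_tuple[OF q e] by simp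
    also have "\<dots> = npin N v e \<cdot> q (HA v)" using q e v_tgt unfolding sheaf_cone_iff by simp
    finally show "npin N v e \<cdot> incoming v \<cdot> edge_tuple Z q = npin N v e \<cdot> q (HA v)" .
  qed
qed

lemma edge_cone_edge_tuple:
  assumes q: "sheaf_cone Z q" and j: "j \<in> inc_nodes N"
  shows "edge_cone (edge_tuple Z q) j = q j"
proof -
  have b: "edge_tuple Z q \<in> Hom D Z B" using edge_tuple_in_Hom[OF q] .
  have vertex: "\<pi>P v \<cdot> Am \<cdot> edge_tuple Z q = q (NV v)" if v: "v \<in> nV N" for v
  proof -
    have "\<pi>P v \<cdot> Am \<cdot> edge_tuple Z q = (palpha D N v \<cdot> incoming v) \<cdot> edge_tuple Z q"
      using comp_assoc[OF b Am_hom proj_P_in_Hom[OF v]] proj_P_comp_Am[OF v] by simp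
    also have "\<dots> = palpha D N v \<cdot> q (HA v)"
      using comp_assoc[OF b incoming_in_Hom[OF v] palpha_in_Hom[OF v]]
        incoming_comp_edge_tuple[OF q v] by simp
    also have "\<dots> = q (NV v)" using q v unfolding sheaf_cone_iff by blast
    finally show ?thesis .
  qed
  from j show ?thesis
    using vertex incoming_comp_edge_tuple[OF q] proj_B_comp_edge_tuple[OF q] q
    unfolding sheaf_cone_iff by (auto simp: inc_nodes_def edge_cone_def)
qed

lemma edge_tuple_fixed:
  assumes q: "sheaf_cone Z q"
  shows "(Dm \<cdot> Am) \<cdot> edge_tuple Z q = edge_tuple Z q"
proof (rule product_eqI[OF Bprod])
  let ?b = "edge_tuple Z q"
  have b: "?b \<in> Hom D Z B" using edge_tuple_in_Hom[OF q] .
  have Ab: "Am \<cdot> ?b \<in> Hom D Z P" using comp_in_Hom[OF b Am_hom] .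
  show "(Dm \<cdot> Am) \<cdot> ?b \<in> Hom D Z B" using comp_in_Hom[OF b comp_in_Hom[OF Am_hom Dm_hom]] .
  show "?b \<in> Hom D Z B" using b .
  show "\<forall>e\<in>nE N. \<pi>B e \<cdot> (Dm \<cdot> Am) \<cdot> ?b = \<pi>B e \<cdot> ?b"
  proof
    fix e assume e: "e \<in> nE N"
    have s: "src N e \<in> nV N" using src_in_V[OF e] .
    have "\<pi>B e \<cdot> (Dm \<cdot> Am) \<cdot> ?b = (\<pi>B e \<cdot> Dm) \<cdot> Am \<cdot> ?b"
      using comp_assoc[OF b Am_hom Dm_hom] comp_assoc[OF Ab Dm_hom proj_B_in_Hom[OF e]] by simp
    also have "\<dots> = ndelta N e \<cdot> \<pi>P (src N e) \<cdot> Am \<cdot> ?b"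
      using Dm_comp e comp_assoc[OF Ab proj_P_in_Hom[OF s] delta_in_Hom[OF e]] by simp
    also have "\<dots> = ndelta N e \<cdot> q (NV (src N e))"
      using edge_cone_edge_tuple[OF q, of "NV (src N e)"] s by (simp add: inc_nodes_def edge_cone_def)
    also have "\<dots> = q (NE e)" using q e unfolding sheaf_cone_iff by blast
    also have "\<dots> = \<pi>B e \<cdot> ?b" using proj_B_comp_edge_tuple[OF q e] by simp
    finally show "\<pi>B e \<cdot> (Dm \<cdot> Am) \<cdot> ?b = \<pi>B e \<cdot> ?b" .
  qed
qed

lemma equalizer_is_H0:
  assumes eq: "is_equalizer D (idm D B) (Dm \<cdot> Am) E k"
  shows "is_H0 D N E (edge_cone k)"
proof -
  have k: "k \<in> Hom D E B" and k_fixed: "(Dm \<cdot> Am) \<cdot> k = k"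
    and univ: "\<And>Z x. Z \<in> Ob D \<Longrightarrow> x \<in> Hom D Z B \<Longrightarrow> (Dm \<cdot> Am) \<cdot> x = x \<Longrightarrow>
                  \<exists>!u. u \<in> Hom D Z E \<and> k \<cdot> u = x"
    using eq unfolding equalizer_id_iff[OF comp_in_Hom[OF Am_hom Dm_hom]] by blast+
  show ?thesis
    unfolding is_H0_def is_limit_iff_cone
  proof (intro conjI allI impI)
    show "sheaf_cone E (edge_cone k)" using edge_cone_sheaf_cone[OF k k_fixed] .
    fix Z q assume q: "sheaf_cone Z q"
    have Z: "Z \<in> Ob D" using q unfolding is_cone_def by blast
    obtain u where u: "u \<in> Hom D Z E" and ku: "k \<cdot> u = edge_tuple Z q"
      using univ[OF Z edge_tuple_in_Hom[OF q] edge_tuple_fixed[OF q]] by blast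
    show "\<exists>!u. u \<in> Hom D Z E \<and> (\<forall>j\<in>inc_nodes N. edge_cone k j \<cdot> u = q j)"
    proof (rule ex1I[of _ u])
      show "u \<in> Hom D Z E \<and> (\<forall>j\<in>inc_nodes N. edge_cone k j \<cdot> u = q j)"
        using u edge_cone_comp[OF k u] ku edge_cone_edge_tuple[OF q] by simp
    next
      fix u' assume u': "u' \<in> Hom D Z E \<and> (\<forall>j\<in>inc_nodes N. edge_cone k j \<cdot> u' = q j)"
      have "k \<cdot> u' = k \<cdot> u"
      proof (rule product_eqI[OF Bprod comp_in_Hom[OF _ k] comp_in_Hom[OF u k]])
        show "u' \<in> Hom D Z E" using u' by blast
        show "\<forall>e\<in>nE N. \<pi>B e \<cdot> k \<cdot> u' = \<pi>B e \<cdot> k \<cdot> u"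
        proof
          fix e assume e: "e \<in> nE N"
          have "\<pi>B e \<cdot> k \<cdot> u' = edge_cone k (NE e) \<cdot> u'"
            using comp_assoc[OF conjunct1[OF u'] k proj_B_in_Hom[OF e]] by (simp add: edge_cone_def)
          also have "\<dots> = q (NE e)" using u' e by (simp add: inc_nodes_def)
          also have "\<dots> = \<pi>B e \<cdot> k \<cdot> u"
            using comp_assoc[OF u k proj_B_in_Hom[OF e]] ku proj_B_comp_edge_tuple[OF q e] by simp
          finally show "\<pi>B e \<cdot> k \<cdot> u' = \<pi>B e \<cdot> k \<cdot> u" .
        qed
      qed
      then show "u' = u" using equalizer_cancel[OF eq] u u' by blast
    qed
  qed
qed

end

theorem mainTheorem3:
  fixes D :: "('o, 'm) lcat"
    and N :: "('o, 'm, 'v, 'e) lnet"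
    and P B :: 'o
    and \<pi>P :: "'v \<Rightarrow> 'm" and \<pi>B :: "'e \<Rightarrow> 'm"
    and Dm Am :: 'm
  assumes LC: "is_liability_category D"
    and LN: "is_liability_network D N"
    and Pprod: "is_product D (nV N) (nX N) P \<pi>P"
    and Bprod: "is_product D (nE N) (Xlam D N) B \<pi>B"
    and Dm_hom: "Dm \<in> Hom D P B"
    and Dm_comp: "\<forall>e\<in>nE N. cmp D (\<pi>B e) Dm = cmp D (ndelta N e) (\<pi>P (src N e))"
    and Am_hom: "Am \<in> Hom D B P"
    and Am_comp: "\<forall>v\<in>nV N. cmp D (\<pi>P v) Am =
                    cmp D (palpha D N v) (tuple D (in_edges N v) (nPin N v) (npin N v) B \<pi>B)"
  shows
    "(\<forall>EP eP EB eB.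
        is_equalizer D (idm D P) (cmp D Am Dm) EP eP \<longrightarrow>
        is_equalizer D (idm D B) (cmp D Dm Am) EB eB \<longrightarrow>
        (\<exists>d a. d \<in> Hom D EP EB \<and> a \<in> Hom D EB EP \<and>
               cmp D eB d = cmp D Dm eP \<and> cmp D eP a = cmp D Am eB \<and>
               cmp D a d = idm D EP \<and> cmp D d a = idm D EB)) \<and>
     (\<forall>L p EB eB.
        is_H0 D N L p \<longrightarrow>
        is_equalizer D (idm D B) (cmp D Dm Am) EB eB \<longrightarrow>
        (\<exists>f g. f \<in> Hom D L EB \<and> g \<in> Hom D EB L \<and>
               cmp D g f = idm D L \<and> cmp D f g = idm D EB)) \<and>
     bij_betw (\<lambda>\<rho>. cmp D Dm \<rho>) (Fix D (cmp D Am Dm)) (Fix D (cmp D Dm Am)) \<and>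
     bij_betw (\<lambda>\<sigma>. cmp D Am \<sigma>) (Fix D (cmp D Dm Am)) (Fix D (cmp D Am Dm)) \<and>
     (\<forall>\<rho>\<in>Fix D (cmp D Am Dm). cmp D Am (cmp D Dm \<rho>) = \<rho>) \<and>
     (\<forall>\<sigma>\<in>Fix D (cmp D Dm Am). cmp D Dm (cmp D Am \<sigma>) = \<sigma>)"
proof -
  interpret liability_operators D N P B \<pi>P \<pi>B Dm Am
    using assms by unfold_locales
  show ?thesis
  proof (intro conjI allI impI)
    fix EP eP EB eB
    assume "is_equalizer D (idm D P) (cmp D Am Dm) EP eP"
      and "is_equalizer D (idm D B) (cmp D Dm Am) EB eB"
    then show "\<exists>d a. d \<in> Hom D EP EB \<and> a \<in> Hom D EB EP \<and>
        cmp D eB d = cmp D Dm eP \<and> cmp D eP a = cmp D Am eB \<and>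
        cmp D a d = idm D EP \<and> cmp D d a = idm D EB"
      by (rule equalizer_swap_iso[OF Dm_hom Am_hom])
  next
    fix L p EB eB
    assume "is_H0 D N L p" and "is_equalizer D (idm D B) (cmp D Dm Am) EB eB"
    then show "\<exists>f g. f \<in> Hom D L EB \<and> g \<in> Hom D EB L \<and>
        cmp D g f = idm D L \<and> cmp D f g = idm D EB"
      using limit_unique_iso equalizer_is_H0 unfolding is_H0_def by blast
  qed (use Fix_comp_bij[OF is_category] Fix_comp_swap[OF is_category] Dm_hom Am_hom in \<open>auto\<close>)
qed

end
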